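(* Let $f:\mathbb{R}^n\to\mathbb{R}^n$ be continuously differentiable and monotone, let $q:\mathbb{R}^n\to\mathbb{R}\cup\{+\infty\}$ be proper, convex and lower semicontinuous, and assume that either $f$ or $\partial q$ is strongly monotone. Let $x\in\mathbb{R}^n$ and $\gamma>0$ be arbitrary, put $u=u_\gamma(x)$, $\hat d=x+u$, $\hat d^*=-\gamma u-f(x)$, and let $G$ be any symmetric positive semidefinite matrix with $\|G\|\le1$ and $Gv^*\in D^*(\partial q)(\hat d,\hat d^* )((I-G)v^* )$ for all $v^*\in\mathbb{R}^n$. Then the linear system \[((I-G)\nabla f(x)+G)\Delta x=(\gamma(I-G)+G)u\] has a unique solution $\Delta x$ (so the new iterate $x+\Delta x$ is well defined), and \[\|\Delta x\|\le\Bigl(1+\frac1{\mu_f+\mu_q}\|\nabla f(x)-I\|\Bigr)\max\{1,\gamma\}\|u\|,\] where $\mu_f=\inf_{z\in\mathbb{R}^n}\mu_f(z)$ and $\mu_q=\inf_{d\in\mathrm{dom}\,\partial q}\mu_q(d)$.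
   Context: $u_\gamma(x)=\arg\min_u\bigl(\tfrac12\gamma\|u\|^2+\langle f(x),u\rangle+q(x+u)\bigr)$; then $\hat d^*\in\partial q(\hat d)$. A map $T$ is monotone if $\langle y_2-y_1,x_2-x_1\rangle\ge0$ for all $(x_i,y_i)\in\mathrm{gph}\, T$, strongly monotone if additionally $\langle y_2-y_1,x_2-x_1\rangle\ge\mu\|x_2-x_1\|^2$ for some $\mu>0$. $\mu_f(z)=\min\{\langle\nabla f(z)w,w\rangle:\|w\|=1\}$ and $\mu_q(d)=\lim_{\rho\downarrow0}\inf\{\langle d_1^*-d_2^*,d_1-d_2\rangle/\|d_1-d_2\|^2: d_i\in\mathcal{B}_\rho(d),(d_i,d_i^* )\in\mathrm{gph}\,\partial q, d_1\neq d_2\}$. $D^*$ denotes the limiting (Mordukhovich) coderivative: $D^*F(\bar x,\bar y)(v^* )=\{u^*:(u^*,-v^* )\in N_{\mathrm{gph}\, F}(\bar x,\bar y)\}$ with $N$ the limiting normal cone (limits of regular normals, the regular normal cone being the polar of the contingent cone). Norms are Euclidean/spectral. *)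

theory Defs
  imports "HOL-Analysis.Analysis"
begin

definition proper_fun :: "('a \<Rightarrow> ereal) \<Rightarrow> bool" where
  "proper_fun q \<longleftrightarrow> (\<forall>x. q x \<noteq> -\<infinity>) \<and> (\<exists>x. q x < \<infinity>)"

definition ereal_convex :: "('a::real_vector \<Rightarrow> ereal) \<Rightarrow> bool" where
  "ereal_convex q \<longleftrightarrow> (\<forall>x y t. 0 < t \<and> t < 1 \<longrightarrow>
      q ((1 - t) *\<^sub>R x + t *\<^sub>R y) \<le> ereal (1 - t) * q x + ereal t * q y)"

definition lsc_fun :: "('a::topological_space \<Rightarrow> ereal) \<Rightarrow> bool" where
  "lsc_fun q \<longleftrightarrow> (\<forall>x. q x \<le> Liminf (at x) q)"

definition subdiff :: "('a::real_inner \<Rightarrow> ereal) \<Rightarrow> 'a \<Rightarrow> 'a set" where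
  "subdiff q x = {s. \<bar>q x\<bar> \<noteq> \<infinity> \<and> (\<forall>y. q y \<ge> q x + ereal (inner s (y - x)))}"

definition gph :: "('a \<Rightarrow> 'b set) \<Rightarrow> ('a \<times> 'b) set" where
  "gph F = {(x, y). y \<in> F x}"

definition dom_sv :: "('a \<Rightarrow> 'b set) \<Rightarrow> 'a set" where
  "dom_sv F = {x. F x \<noteq> {}}"

definition monotone_map :: "('a::real_inner \<Rightarrow> 'a set) \<Rightarrow> bool" where
  "monotone_map T \<longleftrightarrow> (\<forall>x1 y1 x2 y2. y1 \<in> T x1 \<and> y2 \<in> T x2 \<longrightarrow> inner (y2 - y1) (x2 - x1) \<ge> 0)"

definition strongly_monotone_map :: "('a::real_inner \<Rightarrow> 'a set) \<Rightarrow> bool" where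
  "strongly_monotone_map T \<longleftrightarrow> (\<exists>\<mu>>0. \<forall>x1 y1 x2 y2. y1 \<in> T x1 \<and> y2 \<in> T x2 \<longrightarrow>
      inner (y2 - y1) (x2 - x1) \<ge> \<mu> * (norm (x2 - x1))\<^sup>2)"

definition contingent_cone :: "'a::real_normed_vector set \<Rightarrow> 'a \<Rightarrow> 'a set" where
  "contingent_cone A z = {t. \<exists>\<tau> tk. (\<forall>k. \<tau> k > 0) \<and> \<tau> \<longlonglongrightarrow> 0 \<and> tk \<longlonglongrightarrow> t \<and>
      (\<forall>k. z + \<tau> k *\<^sub>R tk k \<in> A)}"

definition regular_normal_cone :: "'a::real_inner set \<Rightarrow> 'a \<Rightarrow> 'a set" where
  "regular_normal_cone A z = {w. \<forall>t\<in>contingent_cone A z. inner w t \<le> 0}"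

definition limiting_normal_cone :: "'a::real_inner set \<Rightarrow> 'a \<Rightarrow> 'a set" where
  "limiting_normal_cone A z = {w. \<exists>zk wk. (\<forall>k. zk k \<in> A \<and> wk k \<in> regular_normal_cone A (zk k)) \<and>
      zk \<longlonglongrightarrow> z \<and> wk \<longlonglongrightarrow> w}"

definition coderivative :: "('a::real_inner \<Rightarrow> 'b::real_inner set) \<Rightarrow> 'a \<Rightarrow> 'b \<Rightarrow> 'b \<Rightarrow> 'a set" where
  "coderivative F x y v = {u. (u, - v) \<in> limiting_normal_cone (gph F) (x, y)}"

definition u_gamma :: "('a::real_inner \<Rightarrow> 'a) \<Rightarrow> ('a \<Rightarrow> ereal) \<Rightarrow> real \<Rightarrow> 'a \<Rightarrow> 'a" where
  "u_gamma f q \<gamma> x = (THE u. \<forall>v.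
      ereal (\<gamma> / 2 * (norm u)\<^sup>2 + inner (f x) u) + q (x + u)
      \<le> ereal (\<gamma> / 2 * (norm v)\<^sup>2 + inner (f x) v) + q (x + v))"

text \<open>mu_f(z) for the Jacobian matrix J z = \<nabla>f(z), and mu_q(d).\<close>
definition mu_f_at :: "real^'n^'n \<Rightarrow> real" where
  "mu_f_at A = Inf {inner (A *v w) w | w. norm w = 1}"

definition mu_q_at :: "('a::real_inner \<Rightarrow> ereal) \<Rightarrow> 'a \<Rightarrow> ereal" where
  "mu_q_at q d = Lim (at_right 0) (\<lambda>\<rho>::real. INF p \<in> {(d1, d1s, d2, d2s). d1 \<in> ball d \<rho> \<and> d2 \<in> ball d \<rho> \<and>
        d1s \<in> subdiff q d1 \<and> d2s \<in> subdiff q d2 \<and> d1 \<noteq> d2}.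
      (case p of (d1, d1s, d2, d2s) \<Rightarrow> ereal (inner (d1s - d2s) (d1 - d2) / (norm (d1 - d2))\<^sup>2)))"

end

theory Submission
  imports Defs
begin

(*
  Write M = (I - G) A + G with A = grad f(x), and let r be the right-hand side.
  The coderivative hypothesis gives <G v, (I - G) v> >= m |(I - G) v|^2 for every
  m <= mu_q: where the subdifferential is locally m-strongly monotone, a regular
  normal (a, b) to its graph satisfies <a, -b> >= m |b|^2, as one sees by testing
  it against tangent directions produced by the resolvent (I + subdiff q)^-1
  (Minty's theorem); the inequality survives the limit defining limiting normals.
  If M w = (I - G) y, the vector v = w - A w + y has (I - G) v = w and G v = y - A w,
  hence <y, w> >= (mu_f + m) |w|^2. So M is injective, and as M (dx - r) =
  (I - G) (I - A) r, we get |dx - r| <= |A - I| |r| / (mu_f + mu_q). Finally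
  |r| <= max 1 gamma |u| because G is symmetric with spectrum in [0, 1].
*)

section \<open>Resolvents of convex lower semicontinuous functions\<close>

lemma subdiff_finite_value:
  assumes "s \<in> subdiff q d"
  obtains a where "q d = ereal a"
  using assms by (cases "q d") (auto simp: subdiff_def)

lemma monotone_map_subdiff: "monotone_map (subdiff q)"
  unfolding monotone_map_def
proof (intro allI impI, elim conjE)
  fix d1 s1 d2 s2
  assume s1: "s1 \<in> subdiff q d1" and s2: "s2 \<in> subdiff q d2"
  obtain a b where a: "q d1 = ereal a" and b: "q d2 = ereal b"
    using s1 s2 by (meson subdiff_finite_value)
  have "ereal b \<ge> ereal a + ereal (inner s1 (d2 - d1))"
    using s1 a b unfolding subdiff_def by (metis (mono_tags, lifting) mem_Collect_eq)
  moreover have "ereal a \<ge> ereal b + ereal (inner s2 (d1 - d2))"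
    using s2 a b unfolding subdiff_def by (metis (mono_tags, lifting) mem_Collect_eq)
  ultimately show "0 \<le> inner (s2 - s1) (d2 - d1)"
    by (simp add: inner_diff_left inner_diff_right)
qed

lemma norm_diff_le_resolvent:
  assumes "s0 \<in> subdiff q d0" "s \<in> subdiff q d"
  shows "norm (d - d0) \<le> norm ((d + s) - (d0 + s0))"
proof -
  have "0 \<le> inner (s - s0) (d - d0)"
    using monotone_map_subdiff assms unfolding monotone_map_def by blast
  then have "(norm (d - d0))\<^sup>2 \<le> inner ((d + s) - (d0 + s0)) (d - d0)"
    by (simp add: power2_norm_eq_inner inner_diff_left inner_add_left algebra_simps)
  also have "\<dots> \<le> norm ((d + s) - (d0 + s0)) * norm (d - d0)"
    by (rule norm_cauchy_schwarz)
  finally show ?thesis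
    by (cases "d = d0") (simp_all add: power2_eq_square)
qed

lemma lsc_fun_eventually_greater:
  fixes q :: "'a::metric_space \<Rightarrow> ereal"
  assumes "lsc_fun q" "y \<longlonglongrightarrow> x" "ereal r < q x"
  shows "eventually (\<lambda>k. ereal r < q (y k)) sequentially"
proof -
  have "ereal r < Liminf (at x) q"
    using assms(1,3) unfolding lsc_fun_def by (blast intro: less_le_trans)
  then have "eventually (\<lambda>z. ereal r < q z) (at x)"
    by (rule less_LiminfD)
  then have "eventually (\<lambda>z. ereal r < q z) (nhds x)"
    using assms(3) unfolding eventually_at_filter by (auto elim: eventually_mono)
  then show ?thesis
    using assms(2) unfolding filterlim_iff by blast
qed

lemma closed_sublevel_lsc_plus_continuous:
  fixes q :: "'a::metric_space \<Rightarrow> ereal"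
  assumes lsc: "lsc_fun q" and h: "continuous_on UNIV h" and K: "closed K"
  shows "closed {y \<in> K. q y + ereal (h y) \<le> ereal c}"
  unfolding closed_sequential_limits
proof (intro allI impI, elim conjE)
  fix y l
  assume y: "\<forall>k. y k \<in> {y \<in> K. q y + ereal (h y) \<le> ereal c}" and l: "y \<longlonglongrightarrow> l"
  have "l \<in> K"
    using y l K closed_sequentially by blast
  moreover have "q l + ereal (h l) \<le> ereal c"
  proof (rule ccontr)
    assume "\<not> q l + ereal (h l) \<le> ereal c"
    then have "ereal (c - h l) < q l"
      by (cases "q l") auto
    then obtain r where "ereal (c - h l) < ereal r" and r2: "ereal r < q l"
      using ereal_dense2 by blast
    then have r1: "c - h l < r"
      by simp
    have "eventually (\<lambda>k. ereal r < q (y k)) sequentially"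
      by (rule lsc_fun_eventually_greater[OF lsc l r2])
    moreover have "(\<lambda>k. h (y k)) \<longlonglongrightarrow> h l"
      using continuous_on_tendsto_compose[OF h l] by simp
    then have "eventually (\<lambda>k. c - r < h (y k)) sequentially"
      using r1 by (auto intro: order_tendstoD)
    ultimately have "eventually (\<lambda>k. ereal c < q (y k) + ereal (h (y k))) sequentially"
    proof eventually_elim
      case (elim k)
      then show ?case
        by (cases "q (y k)") auto
    qed
    then obtain N where N: "\<And>k. N \<le> k \<Longrightarrow> ereal c < q (y k) + ereal (h (y k))"
      unfolding eventually_sequentially by blast
    have "q (y N) + ereal (h (y N)) \<le> ereal c"
      using y by blast
    with N[OF order_refl] show False
      by (simp add: leD)
  qed
  ultimately show "l \<in> {y \<in> K. q y + ereal (h y) \<le> ereal c}"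
    by simp
qed

lemma ereal_le_of_forall_greater_le:
  fixes x V :: ereal
  assumes "\<And>c. V < ereal c \<Longrightarrow> x \<le> ereal c"
  shows "x \<le> V"
proof (rule ccontr)
  assume "\<not> x \<le> V"
  then have "V < x"
    by simp
  then obtain c where "V < ereal c" "ereal c < x"
    using ereal_dense2 by blast
  with assms show False
    by (meson leD)
qed

lemma compact_closed_sublevels_imp_min:
  fixes g :: "'a::topological_space \<Rightarrow> ereal"
  assumes K: "compact K" "K \<noteq> {}" and closed: "\<And>c. closed {y \<in> K. g y \<le> ereal c}"
  obtains y where "y \<in> K" "\<And>y'. y' \<in> K \<Longrightarrow> g y \<le> g y'"
proof -
  define V where "V = (INF y\<in>K. g y)"
  have "K \<inter> \<Inter> ((\<lambda>c. {y \<in> K. g y \<le> ereal c}) ` {c. V < ereal c}) \<noteq> {}"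
  proof (rule compact_imp_fip_image[OF K(1) closed])
    fix I assume I: "finite I" "I \<subseteq> {c. V < ereal c}"
    show "K \<inter> \<Inter> ((\<lambda>c. {y \<in> K. g y \<le> ereal c}) ` I) \<noteq> {}"
    proof (cases "I = {}")
      case False
      then have "V < ereal (Min I)"
        using I Min_in by blast
      then obtain y where y: "y \<in> K" "g y < ereal (Min I)"
        unfolding V_def by (meson INF_less_iff)
      have "g y \<le> ereal c" if "c \<in> I" for c
        using y(2) Min_le[OF I(1) that] by (meson ereal_less_eq(3) less_imp_le order_trans)
      with y(1) show ?thesis
        by blast
    qed (use K in simp)
  qed
  then obtain y where "y \<in> K \<inter> \<Inter> ((\<lambda>c. {y \<in> K. g y \<le> ereal c}) ` {c. V < ereal c})"
    by (meson ex_in_conv)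
  then have y: "y \<in> K" "\<And>c. V < ereal c \<Longrightarrow> g y \<le> ereal c"
    by blast+
  show ?thesis
  proof (rule that[OF y(1)])
    fix y' assume "y' \<in> K"
    have "g y \<le> V"
      using y(2) by (rule ereal_le_of_forall_greater_le)
    also have "V \<le> g y'"
      unfolding V_def using \<open>y' \<in> K\<close> by (rule INF_lower)
    finally show "g y \<le> g y'" .
  qed
qed

lemma ereal_convexD_real:
  assumes "ereal_convex q" "0 < t" "t < 1" "q x = ereal a" "q y = ereal b"
  shows "q ((1 - t) *\<^sub>R x + t *\<^sub>R y) \<le> ereal ((1 - t) * a + t * b)"
  using assms unfolding ereal_convex_def by (metis times_ereal.simps(1) plus_ereal.simps(1))

lemma ereal_convex_lower_bound_beyond_sphere:
  fixes q :: "'a::real_normed_vector \<Rightarrow> ereal"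
  assumes convex: "ereal_convex q" and q0: "q y0 = ereal q0"
    and sphere: "\<And>y'. dist y0 y' = 1 \<Longrightarrow> ereal L \<le> q y'" and far: "1 < dist y y0"
  shows "ereal (q0 - (q0 - L) * dist y y0) \<le> q y"
proof -
  define \<rho> where "\<rho> = dist y y0"
  define t where "t = 1 / \<rho>"
  have \<rho>: "1 < \<rho>"
    using far by (simp add: \<rho>_def)
  then have t: "0 < t" "t < 1"
    by (simp_all add: t_def)
  define y' where "y' = (1 - t) *\<^sub>R y0 + t *\<^sub>R y"
  have "dist y0 y' = t * \<rho>"
    using t by (simp add: y'_def \<rho>_def dist_norm algebra_simps norm_minus_commute
        flip: scaleR_diff_right)
  then have "ereal L \<le> q y'"
    using \<rho> by (intro sphere) (simp add: t_def)
  also have "q y' \<le> ereal ((1 - t) * q0) + ereal t * q y"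
    using convex t q0 unfolding ereal_convex_def y'_def by (metis times_ereal.simps(1))
  finally have L: "ereal L \<le> ereal ((1 - t) * q0) + ereal t * q y" .
  show ?thesis
  proof (cases "q y")
    case (real Q)
    then have "\<rho> * L \<le> \<rho> * ((1 - t) * q0 + t * Q)"
      using L \<rho> by simp
    also have "\<dots> = (\<rho> - 1) * q0 + Q"
      using \<rho> by (simp add: t_def algebra_simps)
    finally show ?thesis
      using real by (simp add: \<rho>_def algebra_simps)
  qed (use L t in simp_all)
qed

lemma convex_lsc_linear_minorant:
  fixes q :: "'a::euclidean_space \<Rightarrow> ereal"
  assumes proper: "proper_fun q" and convex: "ereal_convex q" and lsc: "lsc_fun q"
  obtains y0 q0 D where "q y0 = ereal q0" "0 \<le> D" "\<And>y. ereal (q0 - D - D * dist y y0) \<le> q y"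
proof -
  have not_minf: "q y \<noteq> -\<infinity>" for y
    using proper unfolding proper_fun_def by auto
  obtain y0 where "q y0 < \<infinity>"
    using proper unfolding proper_fun_def by auto
  then obtain q0 where q0: "q y0 = ereal q0"
    using not_minf[of y0] by (cases "q y0") auto
  obtain y1 where "y1 \<in> cball y0 1" and min: "\<And>y. y \<in> cball y0 1 \<Longrightarrow> q y1 \<le> q y"
  proof (rule compact_closed_sublevels_imp_min[where K = "cball y0 1" and g = q])
    show "closed {y \<in> cball y0 1. q y \<le> ereal c}" for c
      using closed_sublevel_lsc_plus_continuous[OF lsc _ closed_cball, where h = "\<lambda>_. 0"] by simp
  qed auto
  then have "q y1 \<le> ereal q0"
    using q0 by (metis centre_in_cball zero_less_one less_imp_le)
  then obtain L where L: "q y1 = ereal L" "L \<le> q0"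
    using not_minf[of y1] by (cases "q y1") auto
  define D where "D = q0 - L"
  have D: "0 \<le> D"
    using L by (simp add: D_def)
  have "ereal (q0 - D - D * dist y y0) \<le> q y" for y
  proof (cases "dist y y0 \<le> 1")
    case True
    then have "ereal L \<le> q y"
      using min[of y] L by (simp add: dist_commute)
    moreover have "q0 - D - D * dist y y0 \<le> L"
      using L by (simp add: D_def)
    ultimately show ?thesis
      by (meson ereal_less_eq(3) order_trans)
  next
    case False
    have "ereal (q0 - D * dist y y0) \<le> q y"
      unfolding D_def
      by (rule ereal_convex_lower_bound_beyond_sphere[OF convex q0])
        (use min L False in auto)
    moreover have "q0 - D - D * dist y y0 \<le> q0 - D * dist y y0"
      using D by simp
    ultimately show ?thesis
      by (meson ereal_less_eq(3) order_trans)
  qed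
  with q0 D show ?thesis
    by (rule that)
qed

lemma add_half_sq_dist_ge_of_linear_minorant:
  fixes q :: "'a::metric_space \<Rightarrow> ereal"
  assumes D: "0 \<le> D" and lower: "ereal (q0 - D - D * dist y y0) \<le> q y"
    and far: "2 * (D + (D + D * dist z y0 + (dist z y0)\<^sup>2 / 2) + 1) + dist z y0 < dist z y"
  shows "ereal (q0 + (dist z y0)\<^sup>2 / 2) \<le> q y + ereal ((dist z y)\<^sup>2 / 2)"
proof -
  define e where "e = dist z y0"
  define r where "r = dist z y"
  define K where "K = D + D * e + e\<^sup>2 / 2"
  have "0 \<le> e" and "0 \<le> K"
    using D by (simp_all add: e_def K_def)
  have "2 * (D + K + 1) + e < r"
    using far by (simp only: K_def e_def r_def)
  then have "2 * D + 2 * K + 2 + e < r"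
    by (simp add: algebra_simps)
  then have half: "K + 1 \<le> r / 2 - D"
    using \<open>0 \<le> e\<close> by linarith
  then have "1 \<le> r" and "0 \<le> r / 2 - D"
    using D \<open>0 \<le> K\<close> by linarith+
  then have "r / 2 - D \<le> r * (r / 2 - D)"
    using mult_right_mono[of 1 r "r / 2 - D"] by simp
  moreover have "r * (r / 2 - D) = r\<^sup>2 / 2 - D * r" and "D * (r + e) = D * r + D * e"
    by (simp_all add: power2_eq_square algebra_simps)
  ultimately have "q0 + e\<^sup>2 / 2 \<le> q0 - D - D * (r + e) + r\<^sup>2 / 2"
    using half unfolding K_def by linarith
  moreover have "dist y y0 \<le> r + e"
    using dist_triangle[of y y0 z] by (simp add: r_def e_def dist_commute)
  then have "q0 - D - D * (r + e) \<le> q0 - D - D * dist y y0"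
    using D by (simp add: mult_left_mono)
  then have "ereal (q0 - D - D * (r + e)) \<le> q y"
    using lower by (meson ereal_less_eq(3) order_trans)
  then have "ereal (q0 - D - D * (r + e) + r\<^sup>2 / 2) \<le> q y + ereal (r\<^sup>2 / 2)"
    by (cases "q y") auto
  ultimately show ?thesis
    unfolding e_def r_def by (meson ereal_less_eq(3) order_trans)
qed

lemma ex_prox_minimizer:
  fixes q :: "'a::euclidean_space \<Rightarrow> ereal"
  assumes proper: "proper_fun q" and convex: "ereal_convex q" and lsc: "lsc_fun q"
  obtains d Qd where "q d = ereal Qd"
    "\<And>y. q d + ereal ((norm (d - z))\<^sup>2 / 2) \<le> q y + ereal ((norm (y - z))\<^sup>2 / 2)"
proof -
  define h where "h y = (dist z y)\<^sup>2 / 2" for y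
  obtain y0 q0 D where q0: "q y0 = ereal q0" and D: "0 \<le> D"
    and lower: "\<And>y. ereal (q0 - D - D * dist y y0) \<le> q y"
    using convex_lsc_linear_minorant[OF assms] by blast
  define K where "K = D + D * dist z y0 + (dist z y0)\<^sup>2 / 2"
  define R where "R = 2 * (D + K + 1) + dist z y0"
  have "0 \<le> K"
    using D by (simp add: K_def)
  then have y0R: "y0 \<in> cball z R"
    using D by (simp add: R_def)
  obtain d where min_R: "\<And>y. y \<in> cball z R \<Longrightarrow> q d + ereal (h d) \<le> q y + ereal (h y)"
  proof (rule compact_closed_sublevels_imp_min[where K = "cball z R" and g = "\<lambda>y. q y + ereal (h y)"])
    show "cball z R \<noteq> {}"
      using y0R by blast
    have "continuous_on UNIV h"
      unfolding h_def by (intro continuous_intros) auto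
    then show "closed {y \<in> cball z R. q y + ereal (h y) \<le> ereal c}" for c
      by (rule closed_sublevel_lsc_plus_continuous[OF lsc _ closed_cball])
  qed auto
  \<comment> \<open>outside the ball, the quadratic term beats the linear decay of q\<close>
  have min: "q d + ereal (h d) \<le> q y + ereal (h y)" for y
  proof (cases "y \<in> cball z R")
    case False
    have "q d + ereal (h d) \<le> ereal (q0 + h y0)"
      using min_R[OF y0R] q0 by simp
    also have "\<dots> \<le> q y + ereal (h y)"
      unfolding h_def
      by (rule add_half_sq_dist_ge_of_linear_minorant[OF D lower]) (use False in \<open>simp add: R_def K_def\<close>)
    finally show ?thesis .
  qed (use min_R in blast)
  moreover have "q d \<noteq> -\<infinity>"
    using proper unfolding proper_fun_def by blast
  moreover have "q d + ereal (h d) < \<infinity>"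
    using min[of y0] q0 by (auto simp: less_le)
  ultimately obtain Qd where "q d = ereal Qd"
    by (cases "q d") auto
  then show ?thesis
  proof (rule that)
    show "q d + ereal ((norm (d - z))\<^sup>2 / 2) \<le> q y + ereal ((norm (y - z))\<^sup>2 / 2)" for y
      using min[of y] by (simp add: h_def dist_norm norm_minus_commute)
  qed
qed

lemma prox_minimizer_directional_ineq:
  fixes q :: "'a::real_inner \<Rightarrow> ereal"
  assumes convex: "ereal_convex q" and Qd: "q d = ereal Qd" and Q: "q y = ereal Q"
    and min: "\<And>y. q d + ereal ((norm (d - z))\<^sup>2 / 2) \<le> q y + ereal ((norm (y - z))\<^sup>2 / 2)"
    and t: "0 < t" "t < 1"
  shows "Qd + inner (z - d) (y - d) \<le> Q + t * (norm (y - d))\<^sup>2 / 2"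
proof -
  define yt where "yt = (1 - t) *\<^sub>R d + t *\<^sub>R y"
  have yt: "yt - z = (d - z) + t *\<^sub>R (y - d)"
    by (simp add: yt_def algebra_simps)
  have sq: "(norm (yt - z))\<^sup>2
      = (norm (d - z))\<^sup>2 + 2 * t * inner (d - z) (y - d) + t\<^sup>2 * (norm (y - d))\<^sup>2"
    unfolding yt power2_norm_eq_inner
    by (simp add: inner_add_left inner_add_right inner_commute power2_eq_square algebra_simps)
  have "q yt \<le> ereal ((1 - t) * Qd + t * Q)"
    unfolding yt_def by (rule ereal_convexD_real[OF convex t Qd Q])
  then have convex_yt: "q yt + ereal ((norm (yt - z))\<^sup>2 / 2)
      \<le> ereal ((1 - t) * Qd + t * Q + (norm (yt - z))\<^sup>2 / 2)"
    by (cases "q yt") auto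
  have "ereal (Qd + (norm (d - z))\<^sup>2 / 2) \<le> q yt + ereal ((norm (yt - z))\<^sup>2 / 2)"
    using min[of yt] Qd by simp
  also note convex_yt
  finally have "Qd + (norm (d - z))\<^sup>2 / 2 \<le> (1 - t) * Qd + t * Q + (norm (yt - z))\<^sup>2 / 2"
    by simp
  then have "t * (Qd + inner (z - d) (y - d)) \<le> t * (Q + t * (norm (y - d))\<^sup>2 / 2)"
    unfolding sq by (simp add: inner_diff_left inner_diff_right inner_commute power2_eq_square field_simps)
  then show ?thesis
    using t by simp
qed

lemma prox_minimizer_imp_subdiff:
  fixes q :: "'a::real_inner \<Rightarrow> ereal"
  assumes convex: "ereal_convex q" and Qd: "q d = ereal Qd"
    and min: "\<And>y. q d + ereal ((norm (d - z))\<^sup>2 / 2) \<le> q y + ereal ((norm (y - z))\<^sup>2 / 2)"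
  shows "z - d \<in> subdiff q d"
proof -
  have "q d + ereal (inner (z - d) (y - d)) \<le> q y" for y
  proof (cases "q y")
    case (real Q)
    have "Qd + inner (z - d) (y - d) \<le> Q"
    proof (rule tendsto_le[of "at_right 0" "\<lambda>t. Q + t * (norm (y - d))\<^sup>2 / 2"])
      show "((\<lambda>t. Q + t * (norm (y - d))\<^sup>2 / 2) \<longlongrightarrow> Q) (at_right 0)"
        using tendsto_intros(1-) by (auto intro!: tendsto_eq_intros)
      show "eventually (\<lambda>t. Qd + inner (z - d) (y - d) \<le> Q + t * (norm (y - d))\<^sup>2 / 2) (at_right 0)"
        unfolding eventually_at_right[OF zero_less_one]
        by (intro exI[of _ 1]) (auto intro: prox_minimizer_directional_ineq[OF convex Qd real min])
    qed simp_all
    then show ?thesis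
      using real Qd by simp
  next
    case MInf
    then show ?thesis
      using min[of y] Qd by simp
  qed simp
  then show ?thesis
    using Qd by (simp add: subdiff_def)
qed

lemma minty_subdiff:
  fixes q :: "'a::euclidean_space \<Rightarrow> ereal"
  assumes "proper_fun q" "ereal_convex q" "lsc_fun q"
  obtains d where "z - d \<in> subdiff q d"
  using ex_prox_minimizer[OF assms] prox_minimizer_imp_subdiff[OF assms(2)] by metis

section \<open>Normals to the graph of the subdifferential\<close>

definition mu_q_within :: "('a::real_inner \<Rightarrow> ereal) \<Rightarrow> 'a \<Rightarrow> real \<Rightarrow> ereal" where
  "mu_q_within q d \<rho> = (INF p \<in> {(d1, d1s, d2, d2s). d1 \<in> ball d \<rho> \<and> d2 \<in> ball d \<rho> \<and>
        d1s \<in> subdiff q d1 \<and> d2s \<in> subdiff q d2 \<and> d1 \<noteq> d2}.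
      (case p of (d1, d1s, d2, d2s) \<Rightarrow> ereal (inner (d1s - d2s) (d1 - d2) / (norm (d1 - d2))\<^sup>2)))"

lemma tendsto_at_right_SUP_antimono:
  fixes g :: "real \<Rightarrow> ereal"
  assumes anti: "\<And>x y. 0 < x \<Longrightarrow> x \<le> y \<Longrightarrow> g y \<le> g x"
  shows "(g \<longlongrightarrow> (SUP \<rho>\<in>{0<..}. g \<rho>)) (at_right 0)"
proof (rule increasing_tendsto)
  show "eventually (\<lambda>x. g x \<le> (SUP \<rho>\<in>{0<..}. g \<rho>)) (at_right 0)"
    using eventually_at_right_less[of 0] by eventually_elim (auto intro: SUP_upper)
next
  fix a assume "a < (SUP \<rho>\<in>{0<..}. g \<rho>)"
  then obtain \<rho> where "0 < \<rho>" "a < g \<rho>"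
    by (auto simp: less_SUP_iff)
  then show "eventually (\<lambda>x. a < g x) (at_right 0)"
    unfolding eventually_at_right[OF \<open>0 < \<rho>\<close>] using anti by (meson less_le_trans less_imp_le)
qed

lemma mu_q_at_eq_SUP: "mu_q_at q d = (SUP \<rho>\<in>{0<..}. mu_q_within q d \<rho>)"
proof -
  have "(mu_q_within q d \<longlongrightarrow> (SUP \<rho>\<in>{0<..}. mu_q_within q d \<rho>)) (at_right 0)"
  proof (rule tendsto_at_right_SUP_antimono)
    fix x y :: real
    assume "0 < x" "x \<le> y"
    then have "ball d x \<subseteq> ball d y"
      by auto
    then show "mu_q_within q d y \<le> mu_q_within q d x"
      unfolding mu_q_within_def by (intro INF_superset_mono) auto
  qed
  then show ?thesis
    unfolding mu_q_at_def mu_q_within_def[symmetric]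
    by (intro tendsto_Lim) (auto simp: trivial_limit_at_right_real)
qed

lemma mu_q_within_le:
  assumes "d1 \<in> ball d \<rho>" "d2 \<in> ball d \<rho>" "s1 \<in> subdiff q d1" "s2 \<in> subdiff q d2" "d1 \<noteq> d2"
  shows "mu_q_within q d \<rho> \<le> ereal (inner (s1 - s2) (d1 - d2) / (norm (d1 - d2))\<^sup>2)"
  unfolding mu_q_within_def by (rule INF_lower2[of "(d1, s1, d2, s2)"]) (use assms in auto)

lemma mu_q_at_ge:
  assumes "\<And>d1 d2 s1 s2. s1 \<in> subdiff q d1 \<Longrightarrow> s2 \<in> subdiff q d2 \<Longrightarrow>
      c * (norm (d1 - d2))\<^sup>2 \<le> inner (s1 - s2) (d1 - d2)"
  shows "ereal c \<le> mu_q_at q d"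
proof -
  have "ereal c \<le> mu_q_within q d 1"
    unfolding mu_q_within_def
  proof (rule INF_greatest, clarify)
    fix d1 s1 d2 s2
    assume "s1 \<in> subdiff q d1" "s2 \<in> subdiff q d2" "d1 \<noteq> d2"
    then show "ereal c \<le> ereal (inner (s1 - s2) (d1 - d2) / (norm (d1 - d2))\<^sup>2)"
      using assms by (simp add: pos_le_divide_eq)
  qed
  also have "\<dots> \<le> mu_q_at q d"
    unfolding mu_q_at_eq_SUP by (intro SUP_upper) auto
  finally show ?thesis .
qed

lemma mu_q_at_gt_imp_locally_strongly_monotone:
  assumes "ereal m < mu_q_at q d"
  obtains \<rho> where "0 < \<rho>"
    "\<And>d1 d2 s1 s2. d1 \<in> ball d \<rho> \<Longrightarrow> d2 \<in> ball d \<rho> \<Longrightarrow> s1 \<in> subdiff q d1 \<Longrightarrow>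
      s2 \<in> subdiff q d2 \<Longrightarrow> m * (norm (d1 - d2))\<^sup>2 \<le> inner (s1 - s2) (d1 - d2)"
proof -
  obtain \<rho> where \<rho>: "0 < \<rho>" "ereal m < mu_q_within q d \<rho>"
    using assms unfolding mu_q_at_eq_SUP by (auto simp: less_SUP_iff)
  have "m * (norm (d1 - d2))\<^sup>2 \<le> inner (s1 - s2) (d1 - d2)"
    if "d1 \<in> ball d \<rho>" "d2 \<in> ball d \<rho>" "s1 \<in> subdiff q d1" "s2 \<in> subdiff q d2" for d1 d2 s1 s2
  proof (cases "d1 = d2")
    case False
    have "ereal m < ereal (inner (s1 - s2) (d1 - d2) / (norm (d1 - d2))\<^sup>2)"
      using \<rho>(2) mu_q_within_le[OF that False] by (rule less_le_trans)
    then show ?thesis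
      using False by (simp add: pos_less_divide_eq less_imp_le)
  qed simp
  with \<rho>(1) show ?thesis
    by (rule that)
qed

lemma resolvent_path_subdiff:
  fixes q :: "'a::euclidean_space \<Rightarrow> ereal"
  assumes proper: "proper_fun q" and convex: "ereal_convex q" and lsc: "lsc_fun q"
    and s0: "s0 \<in> subdiff q d0"
  obtains \<tau> :: "nat \<Rightarrow> real" and T :: "nat \<Rightarrow> 'a" and t
  where "\<And>k. 0 < \<tau> k" "\<tau> \<longlonglongrightarrow> 0" "T \<longlonglongrightarrow> t"
    "\<And>k. s0 + \<tau> k *\<^sub>R (w - T k) \<in> subdiff q (d0 + \<tau> k *\<^sub>R T k)"
proof -
  define \<tau> where "\<tau> k = 1 / (real k + 1)" for k :: nat
  have \<tau>: "0 < \<tau> k" for k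
    by (simp add: \<tau>_def)
  have "\<tau> \<longlonglongrightarrow> 0"
    unfolding \<tau>_def using LIMSEQ_inverse_real_of_nat by (simp add: inverse_eq_divide add.commute)
  \<comment> \<open>split d0 + s0 + \<tau> k w as d + s with s in subdiff q d\<close>
  have "\<forall>k. \<exists>d. d0 + s0 + \<tau> k *\<^sub>R w - d \<in> subdiff q d"
    using minty_subdiff[OF proper convex lsc] by metis
  then obtain dk where dk: "\<And>k. d0 + s0 + \<tau> k *\<^sub>R w - dk k \<in> subdiff q (dk k)"
    by metis
  define T where "T k = (1 / \<tau> k) *\<^sub>R (dk k - d0)" for k
  have dkT: "dk k = d0 + \<tau> k *\<^sub>R T k" for k
    using \<tau>[of k] by (simp add: T_def)
  have graph: "s0 + \<tau> k *\<^sub>R (w - T k) \<in> subdiff q (d0 + \<tau> k *\<^sub>R T k)" for k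
    using dk[of k] by (simp add: dkT algebra_simps)
  have "norm (T k) \<le> norm w" for k
  proof -
    have "(d0 + \<tau> k *\<^sub>R T k + (s0 + \<tau> k *\<^sub>R (w - T k))) - (d0 + s0) = \<tau> k *\<^sub>R w"
      by (simp add: algebra_simps)
    then have "\<tau> k * norm (T k) \<le> \<tau> k * norm w"
      using norm_diff_le_resolvent[OF s0 graph[of k]] \<tau>[of k] by simp
    then show ?thesis
      using \<tau>[of k] by simp
  qed
  then obtain t r where r: "strict_mono r" "(T \<circ> r) \<longlonglongrightarrow> t"
    using compact_imp_seq_compact[OF compact_cball, of "0::'a" "norm w"]
    by (elim seq_compactE[of _ T]) auto
  show ?thesis
  proof (rule that)
    show "(\<lambda>k. \<tau> (r k)) \<longlonglongrightarrow> 0"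
      using LIMSEQ_subseq_LIMSEQ[OF \<open>\<tau> \<longlonglongrightarrow> 0\<close> r(1)] by (simp add: comp_def)
    show "(\<lambda>k. T (r k)) \<longlonglongrightarrow> t"
      using r(2) by (simp add: comp_def)
  qed (use \<tau> graph in auto)
qed

lemma contingent_direction_subdiff:
  fixes q :: "'a::euclidean_space \<Rightarrow> ereal"
  assumes proper: "proper_fun q" and convex: "ereal_convex q" and lsc: "lsc_fun q"
    and s0: "s0 \<in> subdiff q d0" and \<rho>: "0 < \<rho>"
    and local_mono: "\<And>d s. d \<in> ball d0 \<rho> \<Longrightarrow> s \<in> subdiff q d \<Longrightarrow>
      m * (norm (d - d0))\<^sup>2 \<le> inner (s - s0) (d - d0)"
  obtains t where "(t, w - t) \<in> contingent_cone (gph (subdiff q)) (d0, s0)"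
    and "m * (norm t)\<^sup>2 \<le> inner (w - t) t"
proof -
  obtain \<tau> :: "nat \<Rightarrow> real" and T t where \<tau>: "\<And>k. 0 < \<tau> k" "\<tau> \<longlonglongrightarrow> 0" and T: "T \<longlonglongrightarrow> t"
    and graph: "\<And>k. s0 + \<tau> k *\<^sub>R (w - T k) \<in> subdiff q (d0 + \<tau> k *\<^sub>R T k)"
    using resolvent_path_subdiff[OF proper convex lsc s0] by blast
  have "(t, w - t) \<in> contingent_cone (gph (subdiff q)) (d0, s0)"
    unfolding contingent_cone_def
  proof (intro CollectI exI conjI allI)
    show "(\<lambda>k. (T k, w - T k)) \<longlonglongrightarrow> (t, w - t)"
      by (intro tendsto_intros T)
    show "(d0, s0) + \<tau> k *\<^sub>R (T k, w - T k) \<in> gph (subdiff q)" for k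
      using graph[of k] by (simp add: gph_def)
  qed (use \<tau> in auto)
  moreover have "m * (norm t)\<^sup>2 \<le> inner (w - t) t"
  proof (rule tendsto_le[OF trivial_limit_sequentially])
    show "(\<lambda>k. inner (w - T k) (T k)) \<longlonglongrightarrow> inner (w - t) t"
      and "(\<lambda>k. m * (norm (T k))\<^sup>2) \<longlonglongrightarrow> m * (norm t)\<^sup>2"
      by (intro tendsto_intros T)+
    have "(\<lambda>k. d0 + \<tau> k *\<^sub>R T k) \<longlonglongrightarrow> d0 + 0 *\<^sub>R t"
      by (intro tendsto_intros \<tau>(2) T)
    then have "eventually (\<lambda>k. d0 + \<tau> k *\<^sub>R T k \<in> ball d0 \<rho>) sequentially"
      using \<rho> by (simp add: tendsto_iff dist_commute)
    then show "eventually (\<lambda>k. m * (norm (T k))\<^sup>2 \<le> inner (w - T k) (T k)) sequentially"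
    proof eventually_elim
      case (elim k)
      from local_mono[OF elim graph]
      have "(\<tau> k)\<^sup>2 * (m * (norm (T k))\<^sup>2) \<le> (\<tau> k)\<^sup>2 * inner (w - T k) (T k)"
        using \<tau>(1)[of k] by (simp add: power2_eq_square algebra_simps)
      then show ?case
        using \<tau>(1)[of k] by simp
    qed
  qed
  ultimately show ?thesis
    by (rule that)
qed

lemma regular_normal_subdiff_ineq:
  fixes q :: "'a::euclidean_space \<Rightarrow> ereal"
  assumes proper: "proper_fun q" and convex: "ereal_convex q" and lsc: "lsc_fun q"
    and s0: "s0 \<in> subdiff q d0" and \<rho>: "0 < \<rho>" and m: "0 \<le> m"
    and local_mono: "\<And>d s. d \<in> ball d0 \<rho> \<Longrightarrow> s \<in> subdiff q d \<Longrightarrow>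
      m * (norm (d - d0))\<^sup>2 \<le> inner (s - s0) (d - d0)"
    and normal: "(a, \<beta>) \<in> regular_normal_cone (gph (subdiff q)) (d0, s0)"
  shows "m * (norm \<beta>)\<^sup>2 \<le> inner a (- \<beta>)"
proof -
  define w where "w = a + (1 + 2 * m) *\<^sub>R \<beta>"
  obtain t where cone: "(t, w - t) \<in> contingent_cone (gph (subdiff q)) (d0, s0)"
    and strong: "m * (norm t)\<^sup>2 \<le> inner (w - t) t"
    using contingent_direction_subdiff[OF proper convex lsc s0 \<rho> local_mono] by blast
  have "inner a t + inner \<beta> (w - t) \<le> 0"
    using normal cone by (auto simp: regular_normal_cone_def)
  \<comment> \<open>w is chosen so that the two inequalities combine into a complete square\<close>
  moreover have "inner a (- \<beta>) - m * (norm \<beta>)\<^sup>2 = (1 + m) * (norm (t - \<beta>))\<^sup>2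
      + (inner (w - t) t - m * (norm t)\<^sup>2) - (inner a t + inner \<beta> (w - t))"
    by (simp add: w_def power2_norm_eq_inner inner_diff_left inner_diff_right inner_add_left
        inner_add_right inner_commute algebra_simps)
  moreover have "0 \<le> (1 + m) * (norm (t - \<beta>))\<^sup>2"
    using m by simp
  ultimately show ?thesis
    using strong by linarith
qed

lemma regular_normal_subdiff_ineq_mu_q:
  fixes q :: "'a::euclidean_space \<Rightarrow> ereal"
  assumes proper: "proper_fun q" and convex: "ereal_convex q" and lsc: "lsc_fun q"
    and s0: "s0 \<in> subdiff q d0" and m: "0 \<le> m" "m = 0 \<or> ereal m < mu_q_at q d0"
    and normal: "(a, \<beta>) \<in> regular_normal_cone (gph (subdiff q)) (d0, s0)"
  shows "m * (norm \<beta>)\<^sup>2 \<le> inner a (- \<beta>)"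
proof -
  obtain \<rho> where "0 < \<rho>" and local_mono: "\<And>d s. d \<in> ball d0 \<rho> \<Longrightarrow> s \<in> subdiff q d \<Longrightarrow>
      m * (norm (d - d0))\<^sup>2 \<le> inner (s - s0) (d - d0)"
  proof (cases "m = 0")
    case True
    have "0 \<le> inner (s - s0) (d - d0)" if "s \<in> subdiff q d" for d s
      using monotone_map_subdiff[of q] s0 that unfolding monotone_map_def by blast
    then show ?thesis
      using True by (intro that[of 1]) auto
  next
    case False
    then obtain \<rho> where "0 < \<rho>" and "\<And>d1 d2 s1 s2. d1 \<in> ball d0 \<rho> \<Longrightarrow> d2 \<in> ball d0 \<rho> \<Longrightarrow>
        s1 \<in> subdiff q d1 \<Longrightarrow> s2 \<in> subdiff q d2 \<Longrightarrow> m * (norm (d1 - d2))\<^sup>2 \<le> inner (s1 - s2) (d1 - d2)"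
      using m(2) mu_q_at_gt_imp_locally_strongly_monotone by blast
    then show ?thesis
      using that s0 by (meson centre_in_ball)
  qed
  show ?thesis
    by (rule regular_normal_subdiff_ineq[OF proper convex lsc s0 \<open>0 < \<rho>\<close> m(1) local_mono normal])
qed

lemma coderivative_subdiff_ineq_less:
  fixes q :: "'a::euclidean_space \<Rightarrow> ereal"
  assumes proper: "proper_fun q" and convex: "ereal_convex q" and lsc: "lsc_fun q"
    and m: "0 \<le> m" "m = 0 \<or> ereal m < (INF d \<in> dom_sv (subdiff q). mu_q_at q d)"
    and U: "U \<in> coderivative (subdiff q) x y V"
  shows "m * (norm V)\<^sup>2 \<le> inner U V"
proof -
  obtain zk wk where gph: "\<And>k. zk k \<in> gph (subdiff q)"
    and normal: "\<And>k. wk k \<in> regular_normal_cone (gph (subdiff q)) (zk k)"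
    and lim: "wk \<longlonglongrightarrow> (U, - V)"
    using U unfolding coderivative_def limiting_normal_cone_def by blast
  show ?thesis
  proof (rule tendsto_le[OF trivial_limit_sequentially])
    show "(\<lambda>k. inner (fst (wk k)) (- snd (wk k))) \<longlonglongrightarrow> inner U V"
      and "(\<lambda>k. m * (norm (snd (wk k)))\<^sup>2) \<longlonglongrightarrow> m * (norm V)\<^sup>2"
      using tendsto_intros(1-) lim by (auto intro!: tendsto_eq_intros)
    show "eventually (\<lambda>k. m * (norm (snd (wk k)))\<^sup>2 \<le> inner (fst (wk k)) (- snd (wk k))) sequentially"
    proof (intro always_eventually allI)
      fix k
      obtain d0 s0 where z: "zk k = (d0, s0)"
        by fastforce
      have s0: "s0 \<in> subdiff q d0"
        using gph[of k] by (simp add: z gph_def)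
      then have "(INF d \<in> dom_sv (subdiff q). mu_q_at q d) \<le> mu_q_at q d0"
        by (intro INF_lower) (auto simp: dom_sv_def)
      then have "m = 0 \<or> ereal m < mu_q_at q d0"
        using m(2) by (auto intro: less_le_trans)
      then show "m * (norm (snd (wk k)))\<^sup>2 \<le> inner (fst (wk k)) (- snd (wk k))"
        using regular_normal_subdiff_ineq_mu_q[OF proper convex lsc s0 m(1)] normal[of k]
        by (cases "wk k") (simp add: z)
    qed
  qed
qed

lemma coderivative_subdiff_ineq:
  fixes q :: "'a::euclidean_space \<Rightarrow> ereal"
  assumes proper: "proper_fun q" and convex: "ereal_convex q" and lsc: "lsc_fun q"
    and m: "0 \<le> m" and mu_q: "ereal m \<le> (INF d \<in> dom_sv (subdiff q). mu_q_at q d)"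
    and U: "U \<in> coderivative (subdiff q) x y V"
  shows "m * (norm V)\<^sup>2 \<le> inner U V"
proof (cases "m = 0")
  case False
  with m have "0 < m"
    by simp
  \<comment> \<open>mu_q_at yields local strong monotonicity only for moduli below it, so let m' tend to m\<close>
  show ?thesis
  proof (rule tendsto_le[of "at_left m"])
    show "((\<lambda>_. inner U V) \<longlongrightarrow> inner U V) (at_left m)"
      and "((\<lambda>m'. m' * (norm V)\<^sup>2) \<longlongrightarrow> m * (norm V)\<^sup>2) (at_left m)"
      by (intro tendsto_intros)+
    show "eventually (\<lambda>m'. m' * (norm V)\<^sup>2 \<le> inner U V) (at_left m)"
      using eventually_at_left_real[OF \<open>0 < m\<close>]
    proof eventually_elim
      case (elim m')
      then have "ereal m' < ereal m"
        by simp
      then have "ereal m' < (INF d \<in> dom_sv (subdiff q). mu_q_at q d)"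
        using mu_q by (rule less_le_trans)
      with elim show ?case
        by (intro coderivative_subdiff_ineq_less[OF proper convex lsc _ _ U]) auto
    qed
  qed simp
qed (use coderivative_subdiff_ineq_less[OF proper convex lsc order_refl _ U] in simp)

section \<open>The Newton system\<close>

lemma has_derivative_monotone_lower_bound:
  fixes f :: "'a::real_inner \<Rightarrow> 'a"
  assumes deriv: "(f has_derivative f') (at z)"
    and mono: "\<And>x1 x2. c * (norm (x2 - x1))\<^sup>2 \<le> inner (f x2 - f x1) (x2 - x1)"
  shows "c * (norm w)\<^sup>2 \<le> inner (f' w) w"
proof -
  define \<phi> where "\<phi> t = inner (f (z + t *\<^sub>R w)) w" for t :: real
  have "((\<lambda>t::real. z + t *\<^sub>R w) has_derivative (\<lambda>t. t *\<^sub>R w)) (at 0)"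
    by (auto intro!: derivative_eq_intros)
  then have "((\<lambda>t. f (z + t *\<^sub>R w)) has_derivative (\<lambda>t. f' (t *\<^sub>R w))) (at 0)"
    using has_derivative_compose deriv by fastforce
  then have "(\<phi> has_derivative (\<lambda>t. inner (f' (t *\<^sub>R w)) w)) (at 0)"
    unfolding \<phi>_def by (rule has_derivative_inner_left)
  moreover have "(\<lambda>t. inner (f' (t *\<^sub>R w)) w) = (*) (inner (f' w) w)"
    using linear_scale[OF has_derivative_linear[OF deriv]] by (auto simp: mult.commute)
  ultimately have "(\<phi> has_field_derivative inner (f' w) w) (at 0)"
    by (simp add: has_field_derivative_def)
  then have "((\<lambda>t. (\<phi> t - \<phi> 0) / (t - 0)) \<longlongrightarrow> inner (f' w) w) (at_right 0)"
    by (auto simp: has_field_derivative_iff intro: filterlim_mono at_le)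
  moreover have "eventually (\<lambda>t. c * (norm w)\<^sup>2 \<le> (\<phi> t - \<phi> 0) / (t - 0)) (at_right 0)"
    using eventually_at_right_less[of 0]
  proof eventually_elim
    case (elim t)
    have "t * (t * (c * (norm w)\<^sup>2)) = c * (norm (z + t *\<^sub>R w - z))\<^sup>2"
      using elim by (simp add: power2_eq_square algebra_simps)
    also have "\<dots> \<le> inner (f (z + t *\<^sub>R w) - f z) (z + t *\<^sub>R w - z)"
      by (rule mono)
    also have "\<dots> = t * (\<phi> t - \<phi> 0)"
      by (simp add: \<phi>_def inner_diff_left)
    finally show ?case
      using elim by (simp add: pos_le_divide_eq mult.commute)
  qed
  ultimately show ?thesis
    by (rule tendsto_lowerbound) simp
qed

lemma mu_f_at_greatest:
  fixes A :: "real^'n^'n"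
  assumes "\<And>w. c * (norm w)\<^sup>2 \<le> inner (A *v w) w"
  shows "c \<le> mu_f_at A"
  unfolding mu_f_at_def
proof (rule cInf_greatest)
  show "{inner (A *v w) w |w. norm w = 1} \<noteq> {}"
    using norm_axis_1 by blast
next
  fix y assume "y \<in> {inner (A *v w) w |w. norm w = 1}"
  then obtain w where "y = inner (A *v w) w" "norm w = 1"
    by blast
  then show "c \<le> y"
    using assms[of w] by simp
qed

lemma mu_f_at_le_inner:
  fixes A :: "real^'n^'n"
  shows "mu_f_at A * (norm w)\<^sup>2 \<le> inner (A *v w) w"
proof (cases "w = 0")
  case False
  define u where "u = (1 / norm w) *\<^sub>R w"
  obtain K where K: "\<And>x. norm (A *v x) \<le> norm x * K"
    using bounded_linear.bounded[OF matrix_vector_mul_bounded_linear] by blast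
  have "bdd_below {inner (A *v w) w |w. norm w = 1}"
  proof (rule bdd_belowI)
    fix y assume "y \<in> {inner (A *v w) w |w. norm w = 1}"
    then obtain v where v: "y = inner (A *v v) v" "norm v = 1"
      by blast
    have "\<bar>inner (A *v v) v\<bar> \<le> norm (A *v v) * norm v"
      by (rule Cauchy_Schwarz_ineq2)
    also have "\<dots> \<le> K"
      using K[of v] v(2) by simp
    finally show "- K \<le> y"
      using v(1) by linarith
  qed
  moreover have "norm u = 1"
    using False by (simp add: u_def)
  ultimately have "mu_f_at A \<le> inner (A *v u) u"
    unfolding mu_f_at_def by (blast intro: cInf_lower)
  then have "mu_f_at A * (norm w)\<^sup>2 \<le> inner (A *v u) u * (norm w)\<^sup>2"
    by (simp add: mult_right_mono)
  also have "\<dots> = inner (A *v w) w"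
    using False by (simp add: u_def matrix_vector_mult_scaleR power2_eq_square)
  finally show ?thesis .
qed simp

lemma INF_mu_f_at_jacobian_ge:
  fixes f :: "real^'n \<Rightarrow> real^'n" and J :: "real^'n \<Rightarrow> real^'n^'n"
  assumes "\<And>z. (f has_derivative (\<lambda>h. J z *v h)) (at z)"
    and "\<And>x1 x2. c * (norm (x2 - x1))\<^sup>2 \<le> inner (f x2 - f x1) (x2 - x1)"
  shows "ereal c \<le> (INF z. ereal (mu_f_at (J z)))"
  using has_derivative_monotone_lower_bound[OF assms] by (auto intro!: INF_greatest mu_f_at_greatest)

lemma inner_matrix_symmetric:
  fixes G :: "real^'n^'n"
  assumes "transpose G = G"
  shows "inner (G *v x) y = inner x (G *v y)"
  by (metis assms dot_lmul_matrix transpose_matrix_vector)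

lemma norm_matrix_vector_le_of_onorm_le_1:
  fixes G :: "real^'n^'m"
  assumes "onorm (\<lambda>v. G *v v) \<le> 1"
  shows "norm (G *v u) \<le> norm u"
proof -
  have "norm (G *v u) \<le> onorm (\<lambda>v. G *v v) * norm u"
    by (rule onorm[OF matrix_vector_mul_bounded_linear])
  also have "\<dots> \<le> 1 * norm u"
    by (rule mult_right_mono[OF assms norm_ge_zero])
  finally show ?thesis
    by simp
qed

lemma norm_sq_le_inner_of_psd_contraction:
  fixes G :: "real^'n^'n"
  assumes sym: "transpose G = G" and psd: "\<And>v. 0 \<le> inner v (G *v v)"
    and contr: "onorm (\<lambda>v. G *v v) \<le> 1"
  shows "(norm (G *v u))\<^sup>2 \<le> inner (G *v u) u"
proof -
  define a where "a = G *v u"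
  have "inner (G *v a) a \<le> norm (G *v a) * norm a"
    by (rule norm_cauchy_schwarz)
  also have "\<dots> \<le> inner a a"
    using norm_matrix_vector_le_of_onorm_le_1[OF contr, of a]
    by (simp add: mult_right_mono power2_eq_square flip: power2_norm_eq_inner)
  finally have "inner (G *v a) a \<le> inner a a" .
  \<comment> \<open>by symmetry, <G u, u> - |a|^2 = <u - a, G (u - a)> + (|a|^2 - <G a, a>)\<close>
  moreover have "0 \<le> inner (u - a) (G *v (u - a))"
    by (rule psd)
  moreover have "inner (G *v a) u = inner a a"
    using inner_matrix_symmetric[OF sym, of a u] by (simp add: a_def)
  ultimately show ?thesis
    by (simp add: a_def matrix_vector_mult_diff_distrib inner_diff_left inner_diff_right
        inner_commute power2_norm_eq_inner)
qed

lemma norm_extrapolation_psd_contraction_le: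
  fixes G :: "real^'n^'n"
  assumes sym: "transpose G = G" and psd: "\<And>v. 0 \<le> inner v (G *v v)"
    and contr: "onorm (\<lambda>v. G *v v) \<le> 1" and \<gamma>: "1 \<le> \<gamma>"
  shows "norm (\<gamma> *\<^sub>R u + (1 - \<gamma>) *\<^sub>R (G *v u)) \<le> \<gamma> * norm u"
proof -
  define X where "X = inner (G *v u) u"
  define Y where "Y = (norm (G *v u))\<^sup>2"
  have YX: "Y \<le> X"
    unfolding X_def Y_def by (rule norm_sq_le_inner_of_psd_contraction[OF sym psd contr])
  have X: "0 \<le> X"
    using YX zero_le_power2[of "norm (G *v u)"] unfolding Y_def by linarith
  have "(\<gamma> - 1) * Y \<le> (\<gamma> - 1) * X"
    using YX \<gamma> by (simp add: mult_left_mono)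
  also have "\<dots> \<le> 2 * \<gamma> * X"
    using X \<gamma> by (intro mult_right_mono) auto
  finally have nonneg: "0 \<le> (\<gamma> - 1) * (2 * \<gamma> * X - (\<gamma> - 1) * Y)"
    using \<gamma> by simp
  have "(norm (\<gamma> *\<^sub>R u + (1 - \<gamma>) *\<^sub>R (G *v u)))\<^sup>2
      = inner (\<gamma> *\<^sub>R u + (1 - \<gamma>) *\<^sub>R (G *v u)) (\<gamma> *\<^sub>R u + (1 - \<gamma>) *\<^sub>R (G *v u))"
    by (rule power2_norm_eq_inner)
  also have "\<dots> = \<gamma>\<^sup>2 * (norm u)\<^sup>2 - (\<gamma> - 1) * (2 * \<gamma> * X - (\<gamma> - 1) * Y)"
    unfolding X_def Y_def power2_norm_eq_inner
    by (simp add: inner_add_left inner_add_right inner_commute power2_eq_square algebra_simps)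
  also have "\<dots> \<le> (\<gamma> * norm u)\<^sup>2"
    using nonneg by (simp add: power_mult_distrib)
  finally show ?thesis
    by (rule power2_le_imp_le) (use \<gamma> in simp)
qed

lemma norm_gamma_complement_plus_le:
  fixes G :: "real^'n^'n"
  assumes sym: "transpose G = G" and psd: "\<And>v. 0 \<le> inner v (G *v v)"
    and contr: "onorm (\<lambda>v. G *v v) \<le> 1" and \<gamma>: "0 < \<gamma>"
  shows "norm ((\<gamma> *\<^sub>R (mat 1 - G) + G) *v u) \<le> max 1 \<gamma> * norm u"
proof -
  have eq: "(\<gamma> *\<^sub>R (mat 1 - G) + G) *v u = \<gamma> *\<^sub>R u + (1 - \<gamma>) *\<^sub>R (G *v u)"
    by (simp add: matrix_vector_mult_add_rdistrib matrix_vector_mult_diff_rdistrib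
        scaleR_matrix_vector_assoc[symmetric] algebra_simps)
  show ?thesis
  proof (cases "\<gamma> \<le> 1")
    case True
    have Gu: "norm (G *v u) \<le> norm u"
      by (rule norm_matrix_vector_le_of_onorm_le_1[OF contr])
    have "norm (\<gamma> *\<^sub>R u + (1 - \<gamma>) *\<^sub>R (G *v u)) \<le> \<gamma> * norm u + (1 - \<gamma>) * norm (G *v u)"
      using norm_triangle_ineq[of "\<gamma> *\<^sub>R u" "(1 - \<gamma>) *\<^sub>R (G *v u)"] True \<gamma> by simp
    also have "\<dots> \<le> norm u"
      using True Gu mult_left_mono[OF Gu, of "1 - \<gamma>"] by (simp add: algebra_simps)
    finally show ?thesis
      using True eq by simp
  next
    case False
    then show ?thesis
      using norm_extrapolation_psd_contraction_le[OF sym psd contr, of \<gamma> u] eq by simp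
  qed
qed

lemma newton_matrix_lower_bound:
  fixes A G :: "real^'n^'n"
  assumes A: "\<And>w. a * (norm w)\<^sup>2 \<le> inner (A *v w) w"
    and G: "\<And>v. m * (norm ((mat 1 - G) *v v))\<^sup>2 \<le> inner (G *v v) ((mat 1 - G) *v v)"
    and eq: "((mat 1 - G) ** A + G) *v w = (mat 1 - G) *v y"
  shows "norm w * (a + m) \<le> norm y"
proof -
  \<comment> \<open>the test vector for G: its (I - G)-part is w and its G-part is y - A w\<close>
  define v where "v = w - A *v w + y"
  have eq': "A *v w - G *v (A *v w) + G *v w = y - G *v y"
    using eq by (simp add: matrix_vector_mult_add_rdistrib matrix_vector_mult_diff_rdistrib
        matrix_vector_mul_assoc[symmetric])
  have Iv: "(mat 1 - G) *v v = w"
    using eq' by (simp add: v_def matrix_vector_mult_diff_rdistrib matrix_vector_mult_diff_distrib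
        matrix_vector_right_distrib algebra_simps)
  then have Gv: "G *v v = y - A *v w"
    by (simp add: v_def matrix_vector_mult_diff_rdistrib algebra_simps)
  have "(a + m) * (norm w)\<^sup>2 \<le> inner y w"
    using A[of w] G[of v] unfolding Iv Gv by (simp add: inner_diff_left algebra_simps)
  also have "\<dots> \<le> norm y * norm w"
    by (simp add: norm_cauchy_schwarz)
  finally have "norm w * (norm w * (a + m)) \<le> norm w * norm y"
    by (simp add: power2_eq_square algebra_simps)
  then show ?thesis
    by (cases "w = 0") simp_all
qed

(* For Q = \<infinity> the bound is ereal b / \<infinity> = 0. *)
lemma ereal_le_divide_of_forall_mult_le:
  fixes a b e :: real and Q :: ereal
  assumes Q: "0 \<le> Q" "0 < ereal a + Q" and e: "0 \<le> e"
    and le: "\<And>m. 0 \<le> m \<Longrightarrow> ereal m \<le> Q \<Longrightarrow> e * (a + m) \<le> b"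
  shows "ereal e \<le> ereal b / (ereal a + Q)"
proof (cases Q)
  case (real q)
  then have "e * (a + q) \<le> b" and "0 < a + q"
    using le[of q] Q by simp_all
  then show ?thesis
    using real by (simp add: pos_le_divide_eq)
next
  case PInf
  have "e = 0"
  proof (rule ccontr)
    assume "e \<noteq> 0"
    then have "0 < e"
      using e by simp
    define m where "m = (\<bar>b\<bar> + e * \<bar>a\<bar>) / e + 1"
    have "0 \<le> m"
      using \<open>0 < e\<close> by (simp add: m_def)
    then have "e * (a + m) \<le> b"
      using le PInf by simp
    moreover have "e * (a + m) = e * (a + \<bar>a\<bar>) + \<bar>b\<bar> + e"
      using \<open>0 < e\<close> by (simp add: m_def field_simps)
    moreover have "0 \<le> e * (a + \<bar>a\<bar>)"
      using e by simp
    ultimately show False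
      using \<open>0 < e\<close> by linarith
  qed
  then show ?thesis
    using PInf by simp
qed (use Q in simp)

lemma newton_system_norm_le:
  fixes A G :: "real^'n^'n" and Q :: ereal
  assumes A: "\<And>w. a * (norm w)\<^sup>2 \<le> inner (A *v w) w"
    and Q: "0 \<le> Q" "0 < ereal a + Q"
    and G: "\<And>m v. 0 \<le> m \<Longrightarrow> ereal m \<le> Q \<Longrightarrow>
      m * (norm ((mat 1 - G) *v v))\<^sup>2 \<le> inner (G *v v) ((mat 1 - G) *v v)"
    and eq: "((mat 1 - G) ** A + G) *v w = (mat 1 - G) *v y"
  shows "ereal (norm w) \<le> ereal (norm y) / (ereal a + Q)"
  by (rule ereal_le_divide_of_forall_mult_le[OF Q norm_ge_zero])
    (use newton_matrix_lower_bound[OF A G eq] in simp)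

lemma newton_system_unique_solution:
  fixes A G :: "real^'n^'n" and Q :: ereal
  assumes A: "\<And>w. a * (norm w)\<^sup>2 \<le> inner (A *v w) w"
    and Q: "0 \<le> Q" "0 < ereal a + Q"
    and G: "\<And>m v. 0 \<le> m \<Longrightarrow> ereal m \<le> Q \<Longrightarrow>
      m * (norm ((mat 1 - G) *v v))\<^sup>2 \<le> inner (G *v v) ((mat 1 - G) *v v)"
  shows "\<exists>!dx. ((mat 1 - G) ** A + G) *v dx = r"
proof -
  define M where "M = (mat 1 - G) ** A + G"
  have inj: "w = 0" if "M *v w = 0" for w
    using newton_system_norm_le[OF A Q G, of w 0] that by (simp add: M_def flip: zero_ereal_def)
  then have "inj ((*v) M)"
    by (intro injI) (metis eq_iff_diff_eq_0 matrix_vector_mult_diff_distrib)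
  then obtain B where "M ** B = mat 1"
    by (metis matrix_left_invertible_injective matrix_left_right_inverse)
  then have "M *v (B *v r) = r"
    by (simp add: matrix_vector_mul_assoc)
  then show ?thesis
    unfolding M_def[symmetric]
    by (metis eq_iff_diff_eq_0 inj matrix_vector_mult_diff_distrib)
qed

lemma newton_system_solution_bound:
  fixes A G :: "real^'n^'n" and Q :: ereal
  assumes A: "\<And>w. a * (norm w)\<^sup>2 \<le> inner (A *v w) w"
    and Q: "0 \<le> Q" "0 < ereal a + Q"
    and G: "\<And>m v. 0 \<le> m \<Longrightarrow> ereal m \<le> Q \<Longrightarrow>
      m * (norm ((mat 1 - G) *v v))\<^sup>2 \<le> inner (G *v v) ((mat 1 - G) *v v)"
    and dx: "((mat 1 - G) ** A + G) *v dx = r" and K: "norm r \<le> K"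
  shows "ereal (norm dx) \<le> (1 + ereal (onorm (\<lambda>v. (A - mat 1) *v v)) / (ereal a + Q)) * ereal K"
proof -
  define S where "S = ereal a + Q"
  define on where "on = onorm (\<lambda>v. (A - mat 1) *v v)"
  have "0 \<le> on"
    unfolding on_def by (rule onorm_pos_le[OF matrix_vector_mul_bounded_linear])
  have "(A - mat 1) *v r = A *v r - r"
    by (simp add: matrix_vector_mult_diff_rdistrib)
  then have Ar: "norm (r - A *v r) \<le> on * norm r"
    using onorm[OF matrix_vector_mul_bounded_linear, of "A - mat 1" r] unfolding on_def
    by (simp add: norm_minus_commute)
  have "((mat 1 - G) ** A + G) *v (dx - r) = (mat 1 - G) *v (r - A *v r)"
    using dx by (simp add: matrix_vector_mult_diff_distrib matrix_vector_mult_add_rdistrib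
        matrix_vector_mult_diff_rdistrib matrix_vector_mul_assoc[symmetric] algebra_simps)
  then have "ereal (norm (dx - r)) \<le> ereal (norm (r - A *v r)) / S"
    using newton_system_norm_le[OF A Q G] by (simp add: S_def)
  also have "\<dots> \<le> ereal (on * norm r) / S"
    using Ar Q by (simp add: S_def ereal_divide_right_mono)
  finally have dx_r: "ereal (norm (dx - r)) \<le> ereal (on * norm r) / S" .
  have dx_le: "norm dx \<le> norm r + norm (dx - r)"
    using norm_triangle_ineq[of r "dx - r"] by simp
  have "ereal (norm dx) \<le> (1 + ereal on / S) * ereal K"
  proof (cases S)
    case (real s)
    then have "0 < s"
      using Q by (simp add: S_def)
    then have "norm (dx - r) \<le> on * norm r / s"
      using dx_r real by simp
    then have "norm dx \<le> (1 + on / s) * norm r"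
      using dx_le by (simp add: algebra_simps)
    also have "\<dots> \<le> (1 + on / s) * K"
      using K \<open>0 \<le> on\<close> \<open>0 < s\<close> by (simp add: mult_left_mono)
    finally show ?thesis
      using real \<open>0 < s\<close> by (simp add: add.commute)
  next
    case PInf
    then show ?thesis
      using dx_r dx_le K by simp
  qed (use Q in \<open>simp add: S_def\<close>)
  then show ?thesis
    by (simp add: on_def S_def)
qed

lemma INF_mu_f_at_jacobian_real:
  fixes f :: "real^'n \<Rightarrow> real^'n" and J :: "real^'n \<Rightarrow> real^'n^'n"
  assumes deriv: "\<And>z. (f has_derivative (\<lambda>h. J z *v h)) (at z)"
    and mono: "monotone_map (\<lambda>z. {f z})"
  obtains mf where "(INF z. ereal (mu_f_at (J z))) = ereal mf" "0 \<le> mf"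
    "\<And>w. mf * (norm w)\<^sup>2 \<le> inner (J x *v w) w"
proof -
  have "ereal 0 \<le> (INF z. ereal (mu_f_at (J z)))"
    using mono by (intro INF_mu_f_at_jacobian_ge[OF deriv]) (simp add: monotone_map_def)
  moreover have "(INF z. ereal (mu_f_at (J z))) \<le> ereal (mu_f_at (J x))"
    by (rule INF_lower) simp
  ultimately obtain mf where "(INF z. ereal (mu_f_at (J z))) = ereal mf" "0 \<le> mf"
    and "mf \<le> mu_f_at (J x)"
    by (cases "INF z. ereal (mu_f_at (J z))") auto
  moreover have "mf * (norm w)\<^sup>2 \<le> inner (J x *v w) w" for w
    using mult_right_mono[OF \<open>mf \<le> mu_f_at (J x)\<close> zero_le_power2] mu_f_at_le_inner
    by (rule order_trans)
  ultimately show ?thesis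
    using that by blast
qed

lemma INF_mu_q_at_nonneg: "0 \<le> (INF d \<in> D. mu_q_at q d)"
  unfolding zero_ereal_def using monotone_map_subdiff[of q]
  by (intro INF_greatest mu_q_at_ge) (auto simp: monotone_map_def)

lemma strongly_monotone_imp_mu_sum_pos:
  fixes f :: "real^'n \<Rightarrow> real^'n" and J :: "real^'n \<Rightarrow> real^'n^'n"
  assumes deriv: "\<And>z. (f has_derivative (\<lambda>h. J z *v h)) (at z)"
    and mono: "monotone_map (\<lambda>z. {f z})"
    and strong: "strongly_monotone_map (\<lambda>z. {f z}) \<or> strongly_monotone_map (subdiff q)"
  shows "0 < (INF z. ereal (mu_f_at (J z))) + (INF d \<in> dom_sv (subdiff q). mu_q_at q d)"
proof -
  obtain mf where MF: "(INF z. ereal (mu_f_at (J z))) = ereal mf" and "0 \<le> mf"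
    using INF_mu_f_at_jacobian_real[OF deriv mono] by blast
  have MQ: "0 \<le> (INF d \<in> dom_sv (subdiff q). mu_q_at q d)"
    by (rule INF_mu_q_at_nonneg)
  from strong show ?thesis
  proof
    assume "strongly_monotone_map (\<lambda>z. {f z})"
    then obtain \<mu> where "0 < \<mu>" and "\<And>x1 x2. \<mu> * (norm (x2 - x1))\<^sup>2 \<le> inner (f x2 - f x1) (x2 - x1)"
      by (auto simp: strongly_monotone_map_def)
    then have "ereal \<mu> \<le> ereal mf"
      unfolding MF[symmetric] by (intro INF_mu_f_at_jacobian_ge[OF deriv])
    then show ?thesis
      using \<open>0 < \<mu>\<close> MQ MF by (cases "INF d \<in> dom_sv (subdiff q). mu_q_at q d") auto
  next
    assume "strongly_monotone_map (subdiff q)"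
    then obtain \<mu> where "0 < \<mu>" and "\<And>d1 d2 s1 s2. s1 \<in> subdiff q d1 \<Longrightarrow> s2 \<in> subdiff q d2 \<Longrightarrow>
        \<mu> * (norm (d1 - d2))\<^sup>2 \<le> inner (s1 - s2) (d1 - d2)"
      unfolding strongly_monotone_map_def by blast
    then have "ereal \<mu> \<le> (INF d \<in> dom_sv (subdiff q). mu_q_at q d)"
      by (intro INF_greatest mu_q_at_ge)
    then show ?thesis
      using \<open>0 < \<mu>\<close> \<open>0 \<le> mf\<close> MF by (cases "INF d \<in> dom_sv (subdiff q). mu_q_at q d") auto
  qed
qed

theorem corollary4p5:
  fixes f :: "real^'n \<Rightarrow> real^'n"
    and J :: "real^'n \<Rightarrow> real^'n^'n"
    and q :: "real^'n \<Rightarrow> ereal"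
    and x :: "real^'n" and \<gamma> :: real
    and G :: "real^'n^'n"
  assumes deriv: "\<And>z. (f has_derivative (\<lambda>h. J z *v h)) (at z)"
    and J_cont: "continuous_on UNIV J"
    and f_mono: "monotone_map (\<lambda>z. {f z})"
    and q_proper: "proper_fun q" and q_convex: "ereal_convex q" and q_lsc: "lsc_fun q"
    and strong: "strongly_monotone_map (\<lambda>z. {f z}) \<or> strongly_monotone_map (subdiff q)"
    and gamma_pos: "\<gamma> > 0"
    and G_sym: "transpose G = G"
    and G_psd: "\<And>v. inner v (G *v v) \<ge> 0"
    and G_norm: "onorm (\<lambda>v. G *v v) \<le> 1"
    and G_coderiv: "\<And>v. G *v v \<in> coderivative (subdiff q)
                 (x + u_gamma f q \<gamma> x) (- \<gamma> *\<^sub>R u_gamma f q \<gamma> x - f x) ((mat 1 - G) *v v)"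
  shows "(\<exists>!dx. ((mat 1 - G) ** J x + G) *v dx = (\<gamma> *\<^sub>R (mat 1 - G) + G) *v u_gamma f q \<gamma> x)
       \<and> (\<forall>dx. ((mat 1 - G) ** J x + G) *v dx = (\<gamma> *\<^sub>R (mat 1 - G) + G) *v u_gamma f q \<gamma> x \<longrightarrow>
            ereal (norm dx) \<le>
              (1 + ereal (onorm (\<lambda>v. (J x - mat 1) *v v)) /
                     ((INF z. ereal (mu_f_at (J z))) + (INF d \<in> dom_sv (subdiff q). mu_q_at q d)))
              * ereal (max 1 \<gamma> * norm (u_gamma f q \<gamma> x)))"
proof -
  obtain mf where MF: "(INF z. ereal (mu_f_at (J z))) = ereal mf"
    and Jx: "\<And>w. mf * (norm w)\<^sup>2 \<le> inner (J x *v w) w"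
    using INF_mu_f_at_jacobian_real[OF deriv f_mono] by blast
  have G: "m * (norm ((mat 1 - G) *v v))\<^sup>2 \<le> inner (G *v v) ((mat 1 - G) *v v)"
    if "0 \<le> m" "ereal m \<le> (INF d \<in> dom_sv (subdiff q). mu_q_at q d)" for m v
    using coderivative_subdiff_ineq[OF q_proper q_convex q_lsc that G_coderiv] .
  have pos: "0 < ereal mf + (INF d \<in> dom_sv (subdiff q). mu_q_at q d)"
    using strongly_monotone_imp_mu_sum_pos[OF deriv f_mono strong] unfolding MF .
  have rhs: "norm ((\<gamma> *\<^sub>R (mat 1 - G) + G) *v u_gamma f q \<gamma> x) \<le> max 1 \<gamma> * norm (u_gamma f q \<gamma> x)"
    by (rule norm_gamma_complement_plus_le[OF G_sym G_psd G_norm gamma_pos])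
  show ?thesis
    unfolding MF
    using newton_system_unique_solution[OF Jx INF_mu_q_at_nonneg pos G]
      newton_system_solution_bound[OF Jx INF_mu_q_at_nonneg pos G _ rhs]
    by blast
qed

end
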